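(* Let $(\mathcal I,T)$ be of class $\mathcal{DR}$. If its block system is generating, then $(\mathcal I,T)$ is generating.
   Context: Let $\mathcal I=[0,1]$. A binary dynamical system is given by $c\in]0,1[$ and two $C^2$ bijections, $a:[0,1]\to[0,c]$ and $b:[0,1]\to[c,1]$. The map $T$ equals $a^{-1}$ on $]0,c[$ and $b^{-1}$ on $]c,1[$. Class $\mathcal{DR}$: $a$ is increasing, $b$ is decreasing, $a(0)=0$, $a(1)=c$, $b(0)=1$, $b(1)=c$, $a'>0$ and $b'<0$ on $[0,1]$, and $a'(x)<1$, $b'(x)>-1$ for $x\in]0,1]$. The system $(\mathcal I,T)$ is generating if the intervals $h_w(\mathcal I)$, for $w\in\{0,1\}^k$ and $k\ge1$, generate the Borel $\sigma$-algebra of $\mathcal I$. Here $h_0=a$, $h_1=b$, and $h_w=h_{w_1}\circ\cdots\circ h_{w_k}$. With $q(n)=a^n(1)$ and $g_m=a^{m-1}\circ b$ ($m\ge1$), the block system has inverse branches $g_m$. It is generating if the intervals $g_{m_1}\circ\cdots\circ g_{m_n}(\mathcal I)$, for $n\ge1$ and $m_i\ge1$, generate the Borel $\sigma$-algebra. Equivalently, their maximal diameter over all $(m_1,\dots,m_n)$ tends to $0$ as $n\to\infty$. *)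

theory Defs
  imports "HOL-Analysis.Analysis"
begin

definition C2_on :: "real set \<Rightarrow> (real \<Rightarrow> real) \<Rightarrow> (real \<Rightarrow> real) \<Rightarrow> (real \<Rightarrow> real) \<Rightarrow> bool" where
  "C2_on S f f' f'' \<longleftrightarrow>
     (\<forall>x\<in>S. (f has_real_derivative f' x) (at x within S)) \<and>
     (\<forall>x\<in>S. (f' has_real_derivative f'' x) (at x within S)) \<and>
     continuous_on S f''"

definition class_DR :: "real \<Rightarrow> (real \<Rightarrow> real) \<Rightarrow> (real \<Rightarrow> real) \<Rightarrow> bool" where
  "class_DR c a b \<longleftrightarrow>
     0 < c \<and> c < 1 \<and>
     bij_betw a {0..1} {0..c} \<and> bij_betw b {0..1} {c..1} \<and>
     mono_on {0..1} a \<and> antimono_on {0..1} b \<and>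
     a 0 = 0 \<and> a 1 = c \<and> b 0 = 1 \<and> b 1 = c \<and>
     (\<exists>a' a''. C2_on {0..1} a a' a'' \<and>
        (\<forall>x\<in>{0..1}. a' x > 0) \<and> (\<forall>x\<in>{0<..1}. a' x < 1)) \<and>
     (\<exists>b' b''. C2_on {0..1} b b' b'' \<and>
        (\<forall>x\<in>{0..1}. b' x < 0) \<and> (\<forall>x\<in>{0<..1}. b' x > -1))"

text \<open>h_w for a word w (False = 0, True = 1): h_{w1} o ... o h_{wk}.\<close>
definition hw :: "(real \<Rightarrow> real) \<Rightarrow> (real \<Rightarrow> real) \<Rightarrow> bool list \<Rightarrow> real \<Rightarrow> real" where
  "hw a b ws = foldr (\<lambda>w f. (if w then b else a) \<circ> f) ws id"

definition gblock :: "(real \<Rightarrow> real) \<Rightarrow> (real \<Rightarrow> real) \<Rightarrow> nat \<Rightarrow> real \<Rightarrow> real" where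
  "gblock a b m = (a ^^ (m - 1)) \<circ> b"

definition gw :: "(real \<Rightarrow> real) \<Rightarrow> (real \<Rightarrow> real) \<Rightarrow> nat list \<Rightarrow> real \<Rightarrow> real" where
  "gw a b ms = foldr (\<lambda>m f. gblock a b m \<circ> f) ms id"

definition generating :: "(real \<Rightarrow> real) \<Rightarrow> (real \<Rightarrow> real) \<Rightarrow> bool" where
  "generating a b \<longleftrightarrow>
     sigma_sets {0..1} {hw a b ws ` {0..1} | ws. ws \<noteq> []}
       = sets (restrict_space borel {0..1::real})"

definition block_generating :: "(real \<Rightarrow> real) \<Rightarrow> (real \<Rightarrow> real) \<Rightarrow> bool" where
  "block_generating a b \<longleftrightarrow>
     sigma_sets {0..1} {gw a b ms ` {0..1} | ms. ms \<noteq> [] \<and> (\<forall>m\<in>set ms. 1 \<le> m)}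
       = sets (restrict_space borel {0..1::real})"

end

theory Submission
  imports Defs
begin

text \<open>Every block cylinder is an ordinary cylinder, since the block branch g_m is the
word 0^(m-1) 1; and every cylinder is a continuous image of [0,1], hence compact and
Borel. So the cylinders generate a sigma-algebra lying between the one generated by the
block cylinders, which is the Borel sigma-algebra by assumption, and the Borel
sigma-algebra itself.\<close>

definition block_word :: "nat \<Rightarrow> bool list" where
  "block_word m = replicate (m - 1) False @ [True]"

lemma hw_append: "hw a b (xs @ ys) = hw a b xs \<circ> hw a b ys"
  unfolding hw_def by (induction xs) auto

lemma hw_replicate_False: "hw a b (replicate k False) = a ^^ k"
  by (induction k) (auto simp: hw_def funpow_Suc_right)

lemma hw_block_word: "hw a b (block_word m) = gblock a b m"
  unfolding block_word_def gblock_def hw_append hw_replicate_False by (simp add: hw_def)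

lemma gw_eq_hw_concat: "gw a b ms = hw a b (concat (map block_word ms))"
proof (induction ms)
  case Nil then show ?case by (simp add: gw_def hw_def)
next
  case (Cons m ms) then show ?case by (simp add: gw_def hw_append hw_block_word)
qed

lemma block_cylinders_subset_cylinders:
  "{gw a b ms ` S | ms. ms \<noteq> [] \<and> (\<forall>m\<in>set ms. 1 \<le> m)} \<subseteq> {hw a b ws ` S | ws. ws \<noteq> []}"
proof safe
  fix ms :: "nat list" assume "ms \<noteq> []"
  then have "concat (map block_word ms) \<noteq> []"
    by (cases ms) (auto simp: block_word_def)
  then show "\<exists>ws. gw a b ms ` S = hw a b ws ` S \<and> ws \<noteq> []"
    unfolding gw_eq_hw_concat by blast
qed

lemma hw_maps_into:
  assumes "a ` S \<subseteq> S" "b ` S \<subseteq> S"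
  shows "hw a b ws ` S \<subseteq> S"
  using assms by (induction ws) (auto simp: hw_def)

lemma continuous_on_hw:
  assumes "continuous_on S a" "continuous_on S b" "a ` S \<subseteq> S" "b ` S \<subseteq> S"
  shows "continuous_on S (hw a b ws)"
proof (induction ws)
  case Nil then show ?case by (simp add: hw_def)
next
  case (Cons w ws)
  have "continuous_on S ((if w then b else a) \<circ> hw a b ws)"
    using Cons assms hw_maps_into[OF assms(3,4), of ws]
    by (intro continuous_on_compose) (auto intro: continuous_on_subset[of S])
  then show ?case by (simp add: hw_def)
qed

lemma cylinders_subset_borel:
  assumes "continuous_on {0..1} a" "continuous_on {0..1} b"
    and "a ` {0..1} \<subseteq> {0..1}" "b ` {0..1} \<subseteq> {0..1}"
  shows "{hw a b ws ` {0..1} | ws. ws \<noteq> []} \<subseteq> sets (restrict_space borel {0..1::real})"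
proof safe
  fix ws :: "bool list"
  have "compact (hw a b ws ` {0..1})"
    using continuous_on_hw[OF assms] by (intro compact_continuous_image) auto
  then show "hw a b ws ` {0..1} \<in> sets (restrict_space borel {0..1})"
    using hw_maps_into[OF assms(3,4)]
    by (simp add: sets_restrict_space_iff compact_imp_closed borel_closed)
qed

lemma class_DR_continuous_self_maps:
  assumes "class_DR c a b"
  shows "continuous_on {0..1} a" "continuous_on {0..1} b"
    and "a ` {0..1} \<subseteq> {0..1}" "b ` {0..1} \<subseteq> {0..1}"
proof -
  from assms obtain a' a'' b' b'' where
    "C2_on {0..1} a a' a''" "C2_on {0..1} b b' b''"
    and c: "0 < c" "c < 1" "a ` {0..1} = {0..c}" "b ` {0..1} = {c..1}"
    unfolding class_DR_def bij_betw_def by blast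
  then show "continuous_on {0..1} a" "continuous_on {0..1} b"
    unfolding C2_on_def by (metis DERIV_continuous_on)+
  show "a ` {0..1} \<subseteq> {0..1}" "b ` {0..1} \<subseteq> {0..1}"
    using c by auto
qed

theorem proposition3p7:
  fixes c :: real and a b :: "real \<Rightarrow> real"
  assumes "class_DR c a b"
    and "block_generating a b"
  shows "generating a b"
proof -
  let ?H = "{hw a b ws ` {0..1} | ws. ws \<noteq> []}"
  let ?B = "sets (restrict_space borel {0..1::real})"
  have "sigma_sets {0..1} ?H \<subseteq> ?B"
    using sets.sigma_sets_subset[OF cylinders_subset_borel[OF class_DR_continuous_self_maps[OF assms(1)]]]
    by simp
  moreover have "?B \<subseteq> sigma_sets {0..1} ?H"
    using assms(2) sigma_sets_mono'[OF block_cylinders_subset_cylinders[of a b "{0..1}"], of "{0..1}"]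
    unfolding block_generating_def by argo
  ultimately show ?thesis
    unfolding generating_def by blast
qed

end
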